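(* Let $\vec{\mathcal G}=([n],E)$ be an ergodic graph of a deterministic two-player mean-payoff game, suppose $r\in\mathcal P^{\sigma,\tau}$ for some $(\sigma,\tau)\in\Xi$, and let $\gamma$ satisfy $1>\gamma>1-\frac{1}{6n^2\Delta(r)}$. Then $(\sigma,\tau)$ is the unique pair of optimal policies in the discounted game with weights $r$ and discount factor $\gamma$. Consequently the Blackwell threshold satisfies $\gamma^*\le 1-\frac{1}{6n^2\Delta(r)}$.
   Context: Setting: directed graph $\vec{\mathcal G}=([n],E)$ without multiple edges, each vertex having an outgoing edge, $[n]=V_{\max}\uplus V_{\min}$, weights $r\in\mathbb R^E$. Ergodic equation in $(\lambda,u)$: $\lambda+u_i=\max_{(i,j)\in E}\{r_{ij}+u_j\}$ ($i\in V_{\max}$), $\lambda+u_i=\min_{(i,j)\in E}\{r_{ij}+u_j\}$ ($i\in V_{\min}$); $u$ is a bias if $(\lambda,u)$ solves it; ergodic graph: solvable for every $r$; $\lambda$ is the mean-payoff value. Policies $\sigma:V_{\max}\to[n]$, $\tau:V_{\min}\to[n]$ choose outgoing edges; a pair is bias-induced if some bias makes each chosen edge attain the max/min. $\Xi$: pairs whose induced subgraph has exactly one directed cycle; $\mathcal P^{\sigma,\tau}$: set of $r$ for which $(\sigma,\tau)$ is the only bias-induced pair. Condition number: $\Delta(r)=\dfrac{\max\{|r_{ij}-\lambda|:(i,j)\in E\}}{\min\{|r_{ij}-\lambda+u_j-u_i|:(i,j)\in E,\ r_{ij}-\lambda+u_j-u_i\ne0\}}$ ($\Delta=1$ if the denominator's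 set is empty). Discounted game with factor $\gamma\in(0,1)$: along play $i_0,i_1,\dots$ Max receives $(1-\gamma)\sum_{t\ge0}\gamma^t r_{i_ti_{t+1}}$; its value $\lambda^{(\gamma)}\in\mathbb R^n$ is the unique solution of $\lambda^{(\gamma)}_i=\max_{(i,j)\in E}\{(1-\gamma)r_{ij}+\gamma\lambda^{(\gamma)}_j\}$ ($i\in V_{\max}$), $\lambda^{(\gamma)}_i=\min_{(i,j)\in E}\{(1-\gamma)r_{ij}+\gamma\lambda^{(\gamma)}_j\}$ ($i\in V_{\min}$); a policy is optimal iff it uses edges attaining these maxima (resp. minima). The Blackwell threshold $\gamma^*$ is the smallest $\gamma^*\in(0,1)$ such that any policy optimal for some $\gamma\in(\gamma^*,1)$ is optimal for all $\gamma\in(\gamma^*,1)$. *)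

theory Defs
  imports Complex_Main
begin

text \<open>Vertices are 0,...,n-1 (i.e. [n]); E is the edge set; Vmax are the vertices of Max,
  Vmin = [n] - Vmax those of Min; weights r are a function on pairs (only values on E matter).\<close>

definition game_graph :: "nat \<Rightarrow> (nat \<times> nat) set \<Rightarrow> nat set \<Rightarrow> bool" where
  "game_graph n E Vmax \<longleftrightarrow> E \<subseteq> {..<n} \<times> {..<n} \<and> (\<forall>i<n. \<exists>j. (i, j) \<in> E) \<and> Vmax \<subseteq> {..<n}"

definition Vmin :: "nat \<Rightarrow> nat set \<Rightarrow> nat set" where
  "Vmin n Vmax = {..<n} - Vmax"

definition succs :: "(nat \<times> nat) set \<Rightarrow> nat \<Rightarrow> nat set" where
  "succs E i = {j. (i, j) \<in> E}"

definition solves_ergodic ::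
  "nat \<Rightarrow> (nat \<times> nat) set \<Rightarrow> nat set \<Rightarrow> (nat \<Rightarrow> nat \<Rightarrow> real) \<Rightarrow> real \<Rightarrow> (nat \<Rightarrow> real) \<Rightarrow> bool" where
  "solves_ergodic n E Vmax r lam u \<longleftrightarrow>
     (\<forall>i\<in>Vmax. lam + u i = Max ((\<lambda>j. r i j + u j) ` succs E i)) \<and>
     (\<forall>i\<in>Vmin n Vmax. lam + u i = Min ((\<lambda>j. r i j + u j) ` succs E i))"

definition is_bias ::
  "nat \<Rightarrow> (nat \<times> nat) set \<Rightarrow> nat set \<Rightarrow> (nat \<Rightarrow> nat \<Rightarrow> real) \<Rightarrow> (nat \<Rightarrow> real) \<Rightarrow> bool" where
  "is_bias n E Vmax r u \<longleftrightarrow> (\<exists>lam. solves_ergodic n E Vmax r lam u)"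

definition ergodic_graph :: "nat \<Rightarrow> (nat \<times> nat) set \<Rightarrow> nat set \<Rightarrow> bool" where
  "ergodic_graph n E Vmax \<longleftrightarrow> (\<forall>r. \<exists>lam u. solves_ergodic n E Vmax r lam u)"

text \<open>Policies: sigma chooses an outgoing edge at each Max vertex, tau at each Min vertex.
  Only their values on Vmax resp. Vmin matter.\<close>
definition is_policy_pair ::
  "nat \<Rightarrow> (nat \<times> nat) set \<Rightarrow> nat set \<Rightarrow> (nat \<Rightarrow> nat) \<Rightarrow> (nat \<Rightarrow> nat) \<Rightarrow> bool" where
  "is_policy_pair n E Vmax \<sigma> \<tau> \<longleftrightarrow>
     (\<forall>i\<in>Vmax. (i, \<sigma> i) \<in> E) \<and> (\<forall>i\<in>Vmin n Vmax. (i, \<tau> i) \<in> E)"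

definition same_pair ::
  "nat \<Rightarrow> nat set \<Rightarrow> (nat \<Rightarrow> nat) \<Rightarrow> (nat \<Rightarrow> nat) \<Rightarrow> (nat \<Rightarrow> nat) \<Rightarrow> (nat \<Rightarrow> nat) \<Rightarrow> bool" where
  "same_pair n Vmax \<sigma> \<tau> \<sigma>' \<tau>' \<longleftrightarrow> (\<forall>i\<in>Vmax. \<sigma>' i = \<sigma> i) \<and> (\<forall>i\<in>Vmin n Vmax. \<tau>' i = \<tau> i)"

definition bias_induced ::
  "nat \<Rightarrow> (nat \<times> nat) set \<Rightarrow> nat set \<Rightarrow> (nat \<Rightarrow> nat \<Rightarrow> real) \<Rightarrow> (nat \<Rightarrow> nat) \<Rightarrow> (nat \<Rightarrow> nat) \<Rightarrow> bool" where
  "bias_induced n E Vmax r \<sigma> \<tau> \<longleftrightarrow> is_policy_pair n E Vmax \<sigma> \<tau> \<and>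
     (\<exists>lam u. solves_ergodic n E Vmax r lam u \<and>
        (\<forall>i\<in>Vmax. lam + u i = r i (\<sigma> i) + u (\<sigma> i)) \<and>
        (\<forall>i\<in>Vmin n Vmax. lam + u i = r i (\<tau> i) + u (\<tau> i)))"

definition policy_edges ::
  "nat \<Rightarrow> nat set \<Rightarrow> (nat \<Rightarrow> nat) \<Rightarrow> (nat \<Rightarrow> nat) \<Rightarrow> (nat \<times> nat) set" where
  "policy_edges n Vmax \<sigma> \<tau> = {(i, \<sigma> i) | i. i \<in> Vmax} \<union> {(i, \<tau> i) | i. i \<in> Vmin n Vmax}"

text \<open>Directed cycles of a graph with edge set F, represented by their (nonempty) vertex sets;
  for the functional graphs induced by policy pairs a cycle is determined by its vertex set.\<close>
definition cycles :: "(nat \<times> nat) set \<Rightarrow> nat set set" where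
  "cycles F = {set vs | vs. vs \<noteq> [] \<and> distinct vs \<and>
      (\<forall>k<length vs. (vs ! k, vs ! ((k + 1) mod length vs)) \<in> F)}"

definition Xi :: "nat \<Rightarrow> (nat \<times> nat) set \<Rightarrow> nat set \<Rightarrow> (nat \<Rightarrow> nat) \<Rightarrow> (nat \<Rightarrow> nat) \<Rightarrow> bool" where
  "Xi n E Vmax \<sigma> \<tau> \<longleftrightarrow> is_policy_pair n E Vmax \<sigma> \<tau> \<and> card (cycles (policy_edges n Vmax \<sigma> \<tau>)) = 1"

definition P_set ::
  "nat \<Rightarrow> (nat \<times> nat) set \<Rightarrow> nat set \<Rightarrow> (nat \<Rightarrow> nat) \<Rightarrow> (nat \<Rightarrow> nat) \<Rightarrow> (nat \<Rightarrow> nat \<Rightarrow> real) set" where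
  "P_set n E Vmax \<sigma> \<tau> = {r. bias_induced n E Vmax r \<sigma> \<tau> \<and>
      (\<forall>\<sigma>' \<tau>'. bias_induced n E Vmax r \<sigma>' \<tau>' \<longrightarrow> same_pair n Vmax \<sigma> \<tau> \<sigma>' \<tau>')}"

definition cond_num ::
  "(nat \<times> nat) set \<Rightarrow> (nat \<Rightarrow> nat \<Rightarrow> real) \<Rightarrow> real \<Rightarrow> (nat \<Rightarrow> real) \<Rightarrow> real" where
  "cond_num E r lam u =
     (let D = {\<bar>r i j - lam + u j - u i\<bar> | i j. (i, j) \<in> E \<and> r i j - lam + u j - u i \<noteq> 0}
      in if D = {} then 1
         else Max {\<bar>r i j - lam\<bar> | i j. (i, j) \<in> E} / Min D)"

definition is_disc_value ::
  "nat \<Rightarrow> (nat \<times> nat) set \<Rightarrow> nat set \<Rightarrow> (nat \<Rightarrow> nat \<Rightarrow> real) \<Rightarrow> real \<Rightarrow> (nat \<Rightarrow> real) \<Rightarrow> bool" where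
  "is_disc_value n E Vmax r \<gamma> v \<longleftrightarrow>
     (\<forall>i\<in>Vmax. v i = Max ((\<lambda>j. (1 - \<gamma>) * r i j + \<gamma> * v j) ` succs E i)) \<and>
     (\<forall>i\<in>Vmin n Vmax. v i = Min ((\<lambda>j. (1 - \<gamma>) * r i j + \<gamma> * v j) ` succs E i))"

definition disc_optimal ::
  "nat \<Rightarrow> (nat \<times> nat) set \<Rightarrow> nat set \<Rightarrow> (nat \<Rightarrow> nat \<Rightarrow> real) \<Rightarrow> real \<Rightarrow> (nat \<Rightarrow> nat) \<Rightarrow> (nat \<Rightarrow> nat) \<Rightarrow> bool" where
  "disc_optimal n E Vmax r \<gamma> \<sigma> \<tau> \<longleftrightarrow> is_policy_pair n E Vmax \<sigma> \<tau> \<and>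
     (\<exists>v. is_disc_value n E Vmax r \<gamma> v \<and>
        (\<forall>i\<in>Vmax. v i = (1 - \<gamma>) * r i (\<sigma> i) + \<gamma> * v (\<sigma> i)) \<and>
        (\<forall>i\<in>Vmin n Vmax. v i = (1 - \<gamma>) * r i (\<tau> i) + \<gamma> * v (\<tau> i)))"

definition blackwell_prop ::
  "nat \<Rightarrow> (nat \<times> nat) set \<Rightarrow> nat set \<Rightarrow> (nat \<Rightarrow> nat \<Rightarrow> real) \<Rightarrow> real \<Rightarrow> bool" where
  "blackwell_prop n E Vmax r g \<longleftrightarrow>
     (\<forall>\<sigma> \<tau>. (\<exists>\<gamma>. g < \<gamma> \<and> \<gamma> < 1 \<and> disc_optimal n E Vmax r \<gamma> \<sigma> \<tau>) \<longrightarrow>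
        (\<forall>\<gamma>. g < \<gamma> \<and> \<gamma> < 1 \<longrightarrow> disc_optimal n E Vmax r \<gamma> \<sigma> \<tau>))"

definition is_blackwell_threshold ::
  "nat \<Rightarrow> (nat \<times> nat) set \<Rightarrow> nat set \<Rightarrow> (nat \<Rightarrow> nat \<Rightarrow> real) \<Rightarrow> real \<Rightarrow> bool" where
  "is_blackwell_threshold n E Vmax r g \<longleftrightarrow> 0 < g \<and> g < 1 \<and> blackwell_prop n E Vmax r g \<and>
     (\<forall>g'. 0 < g' \<and> g' < 1 \<and> blackwell_prop n E Vmax r g' \<longrightarrow> g \<le> g')"

end

theory Submission
  imports Defs
begin

text \<open>
  Merge \<open>\<sigma>\<close> and \<open>\<tau>\<close> into one map \<open>\<pi>\<close>. Since \<open>r \<in> P\<^sup>\<sigma>\<^sup>,\<^sup>\<tau>\<close>, the edges that are tight for the bias \<open>u\<close>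
  are exactly the edges of \<open>\<pi>\<close>, and every other edge misses tightness by at least the
  smallest nonzero gap \<open>\<delta>\<close>. As the graph of \<open>\<pi>\<close> has a single cycle, all vertices reach one
  vertex \<open>c\<close> within \<open>n - 1\<close> steps, so \<open>u\<close> oscillates by at most \<open>(n - 1) M\<close>, where
  \<open>M = max \<bar>r\<^sub>i\<^sub>j - \<lambda>\<bar>\<close>. The discounted payoff of \<open>\<pi>\<close> is \<open>\<lambda> + (1 - \<gamma>)(u - u c)\<close> up to a correction
  \<open>(1 - \<gamma>)\<^sup>2 C \<circ> \<pi>\<close>, where \<open>C\<close> is the discounted sum of \<open>u - u c\<close> along \<open>\<pi>\<close>; the oscillation of \<open>C\<close>
  is at most \<open>4 (n - 1)\<^sup>2 M\<close>. Once \<open>(1 - \<gamma>) 6 n\<^sup>2 M < \<delta>\<close>, every deviation from \<open>\<pi>\<close> is therefore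
  strictly worse, simultaneously for all such \<open>\<gamma>\<close>.
\<close>

section \<open>Iterating a self-map of \<open>{..<n}\<close>\<close>

lemma funpow_lessThan:
  fixes f :: "nat \<Rightarrow> nat"
  assumes "\<forall>i<n. f i < n" "x < n"
  shows "(f^^k) x < n"
  using assms by (induction k) auto

lemma funpow_shortcut:
  fixes f :: "'a \<Rightarrow> 'a"
  assumes "(f^^a) x = (f^^b) x" "a \<le> b" "b \<le> m"
  shows "(f^^(m - (b - a))) x = (f^^m) x"
proof -
  have "m - (b - a) = m - b + a"
    using assms(2,3) by simp
  then have "(f^^(m - (b - a))) x = (f^^(m - b)) ((f^^a) x)"
    by (simp only: funpow_add o_apply)
  also have "\<dots> = (f^^(m - b + b)) x"
    using assms(1) by (simp only: funpow_add o_apply)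
  finally show ?thesis
    using assms(3) by simp
qed

lemma funpow_eventually_periodic:
  fixes f :: "nat \<Rightarrow> nat"
  assumes "\<forall>i<n. f i < n" "x < n"
  obtains a p where "0 < p" "(f^^p) ((f^^a) x) = (f^^a) x"
proof -
  have "(\<lambda>t. (f^^t) x) ` {..n} \<subseteq> {..<n}"
    using funpow_lessThan[OF assms] by auto
  then have "\<not> inj_on (\<lambda>t. (f^^t) x) {..n}"
    using card_inj_on_le[of "\<lambda>t. (f^^t) x" "{..n}" "{..<n}"] by auto
  then obtain a b where "a < b" "(f^^a) x = (f^^b) x"
    using linorder_inj_onI'[of "{..n}" "\<lambda>t. (f^^t) x"] by blast
  moreover have "(f^^(b - a)) ((f^^a) x) = (f^^(b - a + a)) x"
    by (simp only: funpow_add o_apply)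
  ultimately have "(f^^(b - a)) ((f^^a) x) = (f^^a) x"
    by simp
  with \<open>a < b\<close> show thesis
    by (intro that[of "b - a"]) simp_all
qed

lemma funpow_reaches_within:
  fixes f :: "nat \<Rightarrow> nat"
  assumes "\<forall>i<n. f i < n" "x < n" "(f^^k) x = c"
  shows "\<exists>k<n. (f^^k) x = c"
proof -
  define m where "m = (LEAST k. (f^^k) x = c)"
  have m: "(f^^m) x = c"
    unfolding m_def by (rule LeastI[of _ k]) (rule assms(3))
  have "inj_on (\<lambda>t. (f^^t) x) {..m}"
  proof (rule linorder_inj_onI')
    fix a b assume "a \<in> {..m}" "b \<in> {..m}" "a < b"
    show "(f^^a) x \<noteq> (f^^b) x"
    proof
      assume "(f^^a) x = (f^^b) x"
      then have "(f^^(m - (b - a))) x = c"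
        using funpow_shortcut[where f=f and x=x and a=a and b=b and m=m] \<open>a < b\<close> \<open>b \<in> {..m}\<close> m by auto
      moreover have "m - (b - a) < m"
        using \<open>a < b\<close> \<open>b \<in> {..m}\<close> by auto
      ultimately show False
        unfolding m_def using not_less_Least by blast
    qed
  qed
  moreover have "(\<lambda>t. (f^^t) x) ` {..m} \<subseteq> {..<n}"
    using funpow_lessThan[OF assms(1,2)] by auto
  ultimately have "card {..m} \<le> card {..<n}"
    by (metis card_inj_on_le finite_lessThan)
  then have "m < n"
    by simp
  with m show ?thesis
    by blast
qed

lemma periodic_orbit_in_cycles:
  fixes f :: "nat \<Rightarrow> nat"
  assumes f_closed: "\<forall>i<n. f i < n" and "y < n" "0 < p" "(f^^p) y = y"
  shows "\<exists>q. {(f^^t) y | t. t < q} \<in> cycles {(i, f i) | i. i < n}"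
proof -
  define q where "q = (LEAST p. 0 < p \<and> (f^^p) y = y)"
  have q: "0 < q" "(f^^q) y = y"
    using LeastI[of "\<lambda>p. 0 < p \<and> (f^^p) y = y", OF conjI[OF assms(3,4)]]
    unfolding q_def by auto
  define vs where "vs = map (\<lambda>t. (f^^t) y) [0..<q]"
  have "inj_on (\<lambda>t. (f^^t) y) {..<q}"
  proof (rule linorder_inj_onI')
    fix a b assume "a \<in> {..<q}" "b \<in> {..<q}" "a < b"
    show "(f^^a) y \<noteq> (f^^b) y"
    proof
      assume "(f^^a) y = (f^^b) y"
      then have "(f^^(q - (b - a))) y = y"
        using funpow_shortcut[where f=f and x=y and a=a and b=b and m=q] \<open>a < b\<close> \<open>b \<in> {..<q}\<close> q by auto
      moreover have "0 < q - (b - a)" "q - (b - a) < q"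
        using \<open>a < b\<close> \<open>b \<in> {..<q}\<close> by auto
      ultimately show False
        unfolding q_def using not_less_Least by blast
    qed
  qed
  then have "distinct vs"
    by (simp add: vs_def distinct_map atLeast0LessThan)
  moreover have "(vs ! k, vs ! ((k + 1) mod length vs)) \<in> {(i, f i) | i. i < n}"
    if "k < length vs" for k
  proof -
    have "k < q" "(k + 1) mod q < q"
      using that q(1) by (simp_all add: vs_def)
    then have "vs ! ((k + 1) mod length vs) = (f^^(k + 1)) y"
      using funpow_mod_eq[where f=f and x=y and n=q and m="k + 1", OF q(2)] by (simp add: vs_def)
    with \<open>k < q\<close> show ?thesis
      using funpow_lessThan[OF f_closed \<open>y < n\<close>] by (auto simp: vs_def)
  qed
  moreover have "{(f^^t) y | t. t < q} = set vs" "vs \<noteq> []"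
    using q(1) by (auto simp: vs_def)
  ultimately show ?thesis
    unfolding cycles_def by blast
qed

lemma unique_cycle_reachable:
  fixes f :: "nat \<Rightarrow> nat"
  assumes f_closed: "\<forall>i<n. f i < n" and "card (cycles {(i, f i) | i. i < n}) = 1"
  obtains c where "c < n" "\<forall>j<n. \<exists>k<n. (f^^k) j = c"
proof -
  obtain C where C: "cycles {(i, f i) | i. i < n} = {C}"
    using card_1_singletonE[OF assms(2)] by blast
  then have "C \<in> cycles {(i, f i) | i. i < n}"
    by simp
  then obtain vs where vs: "C = set vs" "vs \<noteq> []"
    "\<forall>k<length vs. (vs ! k, vs ! ((k + 1) mod length vs)) \<in> {(i, f i) | i. i < n}"
    unfolding cycles_def by (auto simp only: mem_Collect_eq)
  have "vs ! 0 < n"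
    using vs(3)[rule_format, of 0] vs(2) by auto
  moreover have "\<exists>k<n. (f^^k) j = vs ! 0" if "j < n" for j
  proof -
    obtain a p where "0 < p" "(f^^p) ((f^^a) j) = (f^^a) j"
      using funpow_eventually_periodic[OF f_closed \<open>j < n\<close>] .
    then obtain q where "{(f^^t) ((f^^a) j) | t. t < q} \<in> cycles {(i, f i) | i. i < n}"
      using periodic_orbit_in_cycles[OF f_closed funpow_lessThan[OF f_closed \<open>j < n\<close>]] by blast
    then have "vs ! 0 \<in> {(f^^t) ((f^^a) j) | t. t < q}"
      using C vs(1,2) by simp
    then obtain t where "(f^^(t + a)) j = vs ! 0"
      by (auto simp: funpow_add)
    then show ?thesis
      using funpow_reaches_within[OF f_closed \<open>j < n\<close>] by blast
  qed
  ultimately show thesis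
    using that by blast
qed

lemma abs_diff_funpow_le:
  fixes f :: "nat \<Rightarrow> nat" and a :: "nat \<Rightarrow> real"
  assumes f_closed: "\<forall>i<n. f i < n" and step: "\<forall>x<n. \<bar>a x - a (f x)\<bar> \<le> B" and "x < n"
  shows "\<bar>a x - a ((f^^k) x)\<bar> \<le> real k * B"
proof (induction k)
  case 0
  then show ?case by simp
next
  case (Suc k)
  have "\<bar>a ((f^^k) x) - a (f ((f^^k) x))\<bar> \<le> B"
    using step funpow_lessThan[OF f_closed \<open>x < n\<close>] by blast
  with Suc show ?case
    by (simp add: algebra_simps)
qed

lemma abs_diff_reaching_le:
  fixes f :: "nat \<Rightarrow> nat" and a :: "nat \<Rightarrow> real"
  assumes f_closed: "\<forall>i<n. f i < n" and step: "\<forall>x<n. \<bar>a x - a (f x)\<bar> \<le> B"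
    and "x < n" "k < n" "(f^^k) x = c"
  shows "\<bar>a x - a c\<bar> \<le> (real n - 1) * B"
proof -
  have "0 \<le> B"
    using step \<open>x < n\<close> by force
  have "\<bar>a x - a c\<bar> \<le> real k * B"
    using abs_diff_funpow_le[OF f_closed step \<open>x < n\<close>, of k] \<open>(f^^k) x = c\<close> by simp
  also have "\<dots> \<le> (real n - 1) * B"
    using \<open>k < n\<close> \<open>0 \<le> B\<close> by (intro mult_right_mono) auto
  finally show ?thesis .
qed

section \<open>Discounted sums along an orbit\<close>

definition discounted_orbit_sum :: "real \<Rightarrow> (nat \<Rightarrow> nat) \<Rightarrow> (nat \<Rightarrow> real) \<Rightarrow> nat \<Rightarrow> real" where
  "discounted_orbit_sum g f w x = (\<Sum>s. g^s * w ((f^^s) x))"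

context
  fixes n :: nat and f :: "nat \<Rightarrow> nat" and w :: "nat \<Rightarrow> real" and g W :: real
  assumes f_closed: "\<forall>i<n. f i < n" and w_bound: "\<forall>x<n. \<bar>w x\<bar> \<le> W"
    and g: "0 \<le> g" "g < 1"
begin

lemma discounted_orbit_summable_abs:
  assumes "x < n"
  shows "summable (\<lambda>s. \<bar>g^s * w ((f^^s) x)\<bar>)"
    and "(\<Sum>s. \<bar>g^s * w ((f^^s) x)\<bar>) \<le> W / (1 - g)"
proof -
  have le: "\<bar>g^s * w ((f^^s) x)\<bar> \<le> W * g^s" for s
  proof -
    have "\<bar>w ((f^^s) x)\<bar> \<le> W"
      using w_bound funpow_lessThan[OF f_closed assms] by blast
    then show ?thesis
      using g(1) by (simp add: abs_mult) (metis mult.commute mult_left_mono zero_le_power)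
  qed
  have geom: "summable (\<lambda>s. W * g^s)"
    using g by (intro summable_mult summable_geometric) simp
  show sum: "summable (\<lambda>s. \<bar>g^s * w ((f^^s) x)\<bar>)"
    by (rule summable_comparison_test'[OF geom]) (use le in simp)
  have "(\<Sum>s. \<bar>g^s * w ((f^^s) x)\<bar>) \<le> (\<Sum>s. W * g^s)"
    by (rule suminf_le[OF le sum geom])
  also have "\<dots> = W / (1 - g)"
    using g by (simp add: suminf_mult suminf_geometric)
  finally show "(\<Sum>s. \<bar>g^s * w ((f^^s) x)\<bar>) \<le> W / (1 - g)" .
qed

lemma abs_discounted_orbit_sum_le:
  assumes "x < n"
  shows "\<bar>discounted_orbit_sum g f w x\<bar> \<le> W / (1 - g)"
  using summable_rabs[OF discounted_orbit_summable_abs(1)[OF assms]]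
    discounted_orbit_summable_abs(2)[OF assms]
  unfolding discounted_orbit_sum_def by linarith

lemma discounted_orbit_sum_step:
  assumes "x < n"
  shows "discounted_orbit_sum g f w x = w x + g * discounted_orbit_sum g f w (f x)"
proof -
  have summable: "summable (\<lambda>s. g^s * w ((f^^s) y))" if "y < n" for y
    using summable_rabs_cancel[OF discounted_orbit_summable_abs(1)[OF that]] .
  have "(\<lambda>s. g^Suc s * w ((f^^Suc s) x)) = (\<lambda>s. g * (g^s * w ((f^^s) (f x))))"
    by (simp add: funpow_Suc_right mult.assoc del: funpow.simps)
  then have "(\<Sum>s. g^Suc s * w ((f^^Suc s) x)) = g * discounted_orbit_sum g f w (f x)"
    using suminf_mult[OF summable[of "f x"]] f_closed assms
    unfolding discounted_orbit_sum_def by simp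
  with suminf_split_head[OF summable[OF assms]] show ?thesis
    unfolding discounted_orbit_sum_def by simp
qed

lemma abs_discounted_orbit_sum_step_le:
  assumes "x < n"
  shows "\<bar>discounted_orbit_sum g f w x - discounted_orbit_sum g f w (f x)\<bar> \<le> 2 * W"
proof -
  let ?G = "discounted_orbit_sum g f w"
  have "\<bar>(1 - g) * ?G (f x)\<bar> \<le> (1 - g) * (W / (1 - g))"
    unfolding abs_mult using abs_discounted_orbit_sum_le[of "f x"] f_closed assms g
    by (intro mult_mono) auto
  also have "\<dots> = W"
    using g by simp
  finally have "\<bar>(1 - g) * ?G (f x)\<bar> \<le> W" .
  moreover have "?G x - ?G (f x) = w x - (1 - g) * ?G (f x)"
    using discounted_orbit_sum_step[OF assms] by (simp add: algebra_simps)
  ultimately show ?thesis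
    using w_bound assms by (smt (verit))
qed

end

section \<open>Discounted values and optimal policies\<close>

lemma abs_Max_image_diff_le:
  fixes F F' :: "'a \<Rightarrow> real"
  assumes "finite A" "A \<noteq> {}" "\<And>j. j \<in> A \<Longrightarrow> \<bar>F j - F' j\<bar> \<le> c"
  shows "\<bar>Max (F ` A) - Max (F' ` A)\<bar> \<le> c"
proof -
  have "Max (G ` A) \<le> Max (G' ` A) + c" if "\<And>j. j \<in> A \<Longrightarrow> \<bar>G j - G' j\<bar> \<le> c"
    for G G' :: "'a \<Rightarrow> real"
  proof -
    have "Max (G ` A) \<in> G ` A"
      using assms(1,2) by (intro Max_in) auto
    then obtain a where "a \<in> A" "Max (G ` A) = G a"
      by auto
    moreover have "G' a \<le> Max (G' ` A)"
      using \<open>a \<in> A\<close> assms(1) by auto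
    ultimately show ?thesis
      using that[OF \<open>a \<in> A\<close>] by linarith
  qed
  from this[of F F'] this[of F' F] show ?thesis
    using assms(3) by (force simp: abs_minus_commute)
qed

lemma abs_Min_image_diff_le:
  fixes F F' :: "'a \<Rightarrow> real"
  assumes "finite A" "A \<noteq> {}" "\<And>j. j \<in> A \<Longrightarrow> \<bar>F j - F' j\<bar> \<le> c"
  shows "\<bar>Min (F ` A) - Min (F' ` A)\<bar> \<le> c"
proof -
  have "Min (G ` A) \<le> Min (G' ` A) + c" if "\<And>j. j \<in> A \<Longrightarrow> \<bar>G j - G' j\<bar> \<le> c"
    for G G' :: "'a \<Rightarrow> real"
  proof -
    have "Min (G' ` A) \<in> G' ` A"
      using assms(1,2) by (intro Min_in) auto
    then obtain a where "a \<in> A" "Min (G' ` A) = G' a"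
      by auto
    moreover have "Min (G ` A) \<le> G a"
      using \<open>a \<in> A\<close> assms(1) by auto
    ultimately show ?thesis
      using that[OF \<open>a \<in> A\<close>] by linarith
  qed
  from this[of F F'] this[of F' F] show ?thesis
    using assms(3) by (force simp: abs_minus_commute)
qed

lemma Vmin_iff: "i \<in> Vmin n Vmax \<longleftrightarrow> i < n \<and> i \<notin> Vmax"
  by (auto simp: Vmin_def)

lemma game_graph_succs:
  assumes "game_graph n E Vmax" "i < n"
  shows "finite (succs E i)" "succs E i \<noteq> {}" "succs E i \<subseteq> {..<n}"
proof -
  show "succs E i \<subseteq> {..<n}" "succs E i \<noteq> {}"
    using assms unfolding game_graph_def succs_def by auto
  then show "finite (succs E i)"
    using finite_subset by blast
qed

lemma is_disc_value_unique:
  assumes graph: "game_graph n E Vmax" and g: "0 \<le> g" "g < 1"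
    and v: "is_disc_value n E Vmax r g v" and v': "is_disc_value n E Vmax r g v'"
    and "i < n"
  shows "v i = v' i"
proof -
  define d where "d = Max ((\<lambda>i. \<bar>v i - v' i\<bar>) ` {..<n})"
  have d_ge: "\<bar>v i - v' i\<bar> \<le> d" if "i < n" for i
    using that unfolding d_def by auto
  have "d \<in> (\<lambda>i. \<bar>v i - v' i\<bar>) ` {..<n}"
    unfolding d_def using \<open>i < n\<close> by (intro Max_in) auto
  then obtain i0 where "i0 < n" and d_eq: "d = \<bar>v i0 - v' i0\<bar>"
    by auto
  have contraction: "\<bar>v i - v' i\<bar> \<le> g * d" if "i < n" for i
  proof -
    note succs = game_graph_succs[OF graph that]
    have lipschitz: "\<bar>((1 - g) * r i j + g * v j) - ((1 - g) * r i j + g * v' j)\<bar> \<le> g * d"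
      if "j \<in> succs E i" for j
    proof -
      have "g * \<bar>v j - v' j\<bar> \<le> g * d"
        using d_ge succs(3) that g by (intro mult_left_mono) auto
      then show ?thesis
        using g by (simp add: abs_mult flip: right_diff_distrib)
    qed
    show ?thesis
    proof (cases "i \<in> Vmax")
      case True
      then show ?thesis
        using v v' abs_Max_image_diff_le[OF succs(1,2) lipschitz] unfolding is_disc_value_def by auto
    next
      case False
      then have "i \<in> Vmin n Vmax"
        using \<open>i < n\<close> by (simp add: Vmin_iff)
      then show ?thesis
        using v v' abs_Min_image_diff_le[OF succs(1,2) lipschitz] unfolding is_disc_value_def by auto
    qed
  qed
  have "(1 - g) * d \<le> 0"
    using contraction[OF \<open>i0 < n\<close>] d_eq by (simp add: algebra_simps)
  then have "d \<le> 0"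
    using g by (simp add: mult_le_0_iff)
  then show ?thesis
    using d_ge[OF \<open>i < n\<close>] by simp
qed

lemma is_disc_value_if_policy_dominates:
  assumes graph: "game_graph n E Vmax" and pol: "is_policy_pair n E Vmax \<sigma> \<tau>"
    and max_rec: "\<And>i. i \<in> Vmax \<Longrightarrow> V i = (1 - g) * r i (\<sigma> i) + g * V (\<sigma> i)"
    and max_le: "\<And>i j. i \<in> Vmax \<Longrightarrow> (i, j) \<in> E \<Longrightarrow> (1 - g) * r i j + g * V j \<le> V i"
    and min_rec: "\<And>i. i \<in> Vmin n Vmax \<Longrightarrow> V i = (1 - g) * r i (\<tau> i) + g * V (\<tau> i)"
    and min_ge: "\<And>i j. i \<in> Vmin n Vmax \<Longrightarrow> (i, j) \<in> E \<Longrightarrow> V i \<le> (1 - g) * r i j + g * V j"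
  shows "is_disc_value n E Vmax r g V"
  unfolding is_disc_value_def
proof (intro conjI ballI)
  fix i assume "i \<in> Vmax"
  then have "i < n"
    using graph by (auto simp: game_graph_def)
  show "V i = Max ((\<lambda>j. (1 - g) * r i j + g * V j) ` succs E i)"
    using pol max_rec max_le \<open>i \<in> Vmax\<close> game_graph_succs[OF graph \<open>i < n\<close>]
    by (intro Max_eqI[symmetric]) (auto simp: is_policy_pair_def succs_def)
next
  fix i assume "i \<in> Vmin n Vmax"
  then have "i < n"
    by (simp add: Vmin_iff)
  show "V i = Min ((\<lambda>j. (1 - g) * r i j + g * V j) ` succs E i)"
    using pol min_rec min_ge \<open>i \<in> Vmin n Vmax\<close> game_graph_succs[OF graph \<open>i < n\<close>]
    by (intro Min_eqI[symmetric]) (auto simp: is_policy_pair_def succs_def)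
qed

lemma disc_optimal_unique_if_strict:
  assumes graph: "game_graph n E Vmax" and pol: "is_policy_pair n E Vmax \<sigma> \<tau>"
    and g: "0 \<le> g" "g < 1"
    and max_rec: "\<And>i. i \<in> Vmax \<Longrightarrow> V i = (1 - g) * r i (\<sigma> i) + g * V (\<sigma> i)"
    and max_lt: "\<And>i j. i \<in> Vmax \<Longrightarrow> (i, j) \<in> E \<Longrightarrow> j \<noteq> \<sigma> i \<Longrightarrow> (1 - g) * r i j + g * V j < V i"
    and min_rec: "\<And>i. i \<in> Vmin n Vmax \<Longrightarrow> V i = (1 - g) * r i (\<tau> i) + g * V (\<tau> i)"
    and min_gt: "\<And>i j. i \<in> Vmin n Vmax \<Longrightarrow> (i, j) \<in> E \<Longrightarrow> j \<noteq> \<tau> i \<Longrightarrow> V i < (1 - g) * r i j + g * V j"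
  shows "disc_optimal n E Vmax r g \<sigma> \<tau> \<and>
    (\<forall>\<sigma>' \<tau>'. disc_optimal n E Vmax r g \<sigma>' \<tau>' \<longrightarrow> same_pair n Vmax \<sigma> \<tau> \<sigma>' \<tau>')"
proof (intro conjI allI impI)
  have max_le: "(1 - g) * r i j + g * V j \<le> V i" if "i \<in> Vmax" "(i, j) \<in> E" for i j
    using max_rec[OF that(1)] max_lt[OF that] by (cases "j = \<sigma> i") auto
  have min_ge: "V i \<le> (1 - g) * r i j + g * V j" if "i \<in> Vmin n Vmax" "(i, j) \<in> E" for i j
    using min_rec[OF that(1)] min_gt[OF that] by (cases "j = \<tau> i") auto
  have V: "is_disc_value n E Vmax r g V"
    using graph pol max_rec max_le min_rec min_ge by (rule is_disc_value_if_policy_dominates)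
  then show "disc_optimal n E Vmax r g \<sigma> \<tau>"
    using pol max_rec min_rec unfolding disc_optimal_def by blast
  fix \<sigma>' \<tau>'
  assume "disc_optimal n E Vmax r g \<sigma>' \<tau>'"
  then obtain v where pol': "is_policy_pair n E Vmax \<sigma>' \<tau>'" and v: "is_disc_value n E Vmax r g v"
    and max_rec': "\<forall>i\<in>Vmax. v i = (1 - g) * r i (\<sigma>' i) + g * v (\<sigma>' i)"
    and min_rec': "\<forall>i\<in>Vmin n Vmax. v i = (1 - g) * r i (\<tau>' i) + g * v (\<tau>' i)"
    unfolding disc_optimal_def by blast
  have v_eq: "v k = V k" if "k < n" for k
    using is_disc_value_unique[OF graph g v V that] .
  have edge_lessThan: "i < n \<and> j < n" if "(i, j) \<in> E" for i j
    using graph that by (auto simp: game_graph_def)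
  have "\<sigma>' i = \<sigma> i" if "i \<in> Vmax" for i
  proof (rule ccontr)
    assume "\<sigma>' i \<noteq> \<sigma> i"
    have "(i, \<sigma>' i) \<in> E"
      using pol' that unfolding is_policy_pair_def by blast
    then show False
      using max_lt[OF that _ \<open>\<sigma>' i \<noteq> \<sigma> i\<close>] max_rec' v_eq edge_lessThan that by fastforce
  qed
  moreover have "\<tau>' i = \<tau> i" if "i \<in> Vmin n Vmax" for i
  proof (rule ccontr)
    assume "\<tau>' i \<noteq> \<tau> i"
    have "(i, \<tau>' i) \<in> E"
      using pol' that unfolding is_policy_pair_def by blast
    then show False
      using min_gt[OF that _ \<open>\<tau>' i \<noteq> \<tau> i\<close>] min_rec' v_eq edge_lessThan that by fastforce
  qed
  ultimately show "same_pair n Vmax \<sigma> \<tau> \<sigma>' \<tau>'"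
    unfolding same_pair_def by blast
qed

lemma disc_optimal_same_pair:
  assumes "same_pair n Vmax \<sigma> \<tau> \<sigma>' \<tau>'" "disc_optimal n E Vmax r g \<sigma> \<tau>"
  shows "disc_optimal n E Vmax r g \<sigma>' \<tau>'"
  using assms unfolding disc_optimal_def is_policy_pair_def same_pair_def by auto

lemma blackwell_prop_if_unique_optimal:
  assumes "\<And>g. g0 < g \<Longrightarrow> g < 1 \<Longrightarrow> disc_optimal n E Vmax r g \<sigma> \<tau> \<and>
      (\<forall>\<sigma>' \<tau>'. disc_optimal n E Vmax r g \<sigma>' \<tau>' \<longrightarrow> same_pair n Vmax \<sigma> \<tau> \<sigma>' \<tau>')"
  shows "blackwell_prop n E Vmax r g0"
  unfolding blackwell_prop_def using assms disc_optimal_same_pair by metis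

lemma blackwell_prop_mono:
  assumes "blackwell_prop n E Vmax r g0" "g0 \<le> g"
  shows "blackwell_prop n E Vmax r g"
  using assms unfolding blackwell_prop_def by (meson le_less_trans)

lemma blackwell_threshold_le:
  assumes "blackwell_prop n E Vmax r g0" "g0 < 1" "is_blackwell_threshold n E Vmax r g"
  shows "g \<le> g0"
proof (cases "0 < g0")
  case True
  then show ?thesis
    using assms unfolding is_blackwell_threshold_def by blast
next
  case False
  have "0 < g" "g < 1" and least: "\<And>g'. 0 < g' \<Longrightarrow> g' < 1 \<Longrightarrow> blackwell_prop n E Vmax r g' \<Longrightarrow> g \<le> g'"
    using assms(3) unfolding is_blackwell_threshold_def by auto
  then have "g \<le> g / 2"
    using blackwell_prop_mono[OF assms(1), of "g / 2"] False by (intro least) auto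
  with \<open>0 < g\<close> show ?thesis
    by simp
qed

section \<open>The ergodic equation and the threshold\<close>

lemma solves_ergodic_max_ge:
  assumes "game_graph n E Vmax" "solves_ergodic n E Vmax r lam u" "i \<in> Vmax" "(i, j) \<in> E"
  shows "r i j + u j \<le> lam + u i"
proof -
  have "i < n"
    using assms(1,4) by (auto simp: game_graph_def)
  then show ?thesis
    using assms game_graph_succs[OF assms(1)] unfolding solves_ergodic_def
    by (auto simp: succs_def)
qed

lemma solves_ergodic_min_le:
  assumes "game_graph n E Vmax" "solves_ergodic n E Vmax r lam u" "i \<in> Vmin n Vmax" "(i, j) \<in> E"
  shows "lam + u i \<le> r i j + u j"
proof -
  have "i < n"
    using assms(3) by (simp add: Vmin_iff)
  then show ?thesis
    using assms game_graph_succs[OF assms(1)] unfolding solves_ergodic_def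
    by (auto simp: succs_def)
qed

lemma solves_ergodic_attained:
  assumes graph: "game_graph n E Vmax" and "solves_ergodic n E Vmax r lam u" "i < n"
  shows "\<exists>j. (i, j) \<in> E \<and> lam + u i = r i j + u j"
proof (cases "i \<in> Vmax")
  case True
  have "Max ((\<lambda>j. r i j + u j) ` succs E i) \<in> (\<lambda>j. r i j + u j) ` succs E i"
    using game_graph_succs[OF graph \<open>i < n\<close>] by (intro Max_in) auto
  with True assms(2) show ?thesis
    unfolding solves_ergodic_def by (auto simp: succs_def)
next
  case False
  have "Min ((\<lambda>j. r i j + u j) ` succs E i) \<in> (\<lambda>j. r i j + u j) ` succs E i"
    using game_graph_succs[OF graph \<open>i < n\<close>] by (intro Min_in) auto
  with False assms(2,3) show ?thesis
    unfolding solves_ergodic_def by (auto simp: succs_def Vmin_iff)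
qed

lemma discount_above_threshold:
  fixes N M d g :: real
  assumes "1 \<le> N" "0 < d" "d \<le> (2 * N - 1) * M" "1 - d / (6 * N^2 * M) < g"
  shows "0 \<le> g" "(1 - g) * (4 * (N - 1)^2 * M) < d"
proof -
  define K where "K = 6 * N^2 * M"
  have "0 < (2 * N - 1) * M"
    using assms(2,3) by linarith
  then have "0 < M"
    using assms(1) by (simp add: zero_less_mult_iff)
  have "N \<le> N^2"
    using assms(1) by (simp add: power2_eq_square)
  then have "2 * N - 1 < 6 * N^2" "4 * (N - 1)^2 \<le> 6 * N^2"
    using assms(1) by (simp_all add: power2_diff)
  then have bounds: "(2 * N - 1) * M < K" "4 * (N - 1)^2 * M \<le> K"
    using \<open>0 < M\<close> unfolding K_def by (simp_all add: mult_strict_right_mono mult_right_mono)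
  have "0 < K"
    using \<open>0 < M\<close> assms(1) unfolding K_def by simp
  have "(1 - g) * K < d"
    using assms(4) \<open>0 < K\<close> unfolding K_def[symmetric] by (simp add: field_simps)
  then have "(1 - g) * K < K"
    using assms(3) bounds(1) by linarith
  then show "0 \<le> g"
    using \<open>0 < K\<close> by (simp add: mult_less_cancel_right2)
  show "(1 - g) * (4 * (N - 1)^2 * M) < d"
  proof (cases "g < 1")
    case True
    then have "(1 - g) * (4 * (N - 1)^2 * M) \<le> (1 - g) * K"
      using bounds(2) by (intro mult_left_mono) auto
    with \<open>(1 - g) * K < d\<close> show ?thesis
      by linarith
  next
    case False
    then have "(1 - g) * (4 * (N - 1)^2 * M) \<le> 0"
      using \<open>0 < M\<close> by (intro mult_nonpos_nonneg) auto
    with assms(2) show ?thesis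
      by linarith
  qed
qed

section \<open>A unique bias-induced pair\<close>

definition policy_map :: "nat set \<Rightarrow> (nat \<Rightarrow> nat) \<Rightarrow> (nat \<Rightarrow> nat) \<Rightarrow> nat \<Rightarrow> nat" where
  "policy_map Vmax \<sigma> \<tau> i = (if i \<in> Vmax then \<sigma> i else \<tau> i)"

locale unique_bias_induced_pair =
  fixes n :: nat and E :: "(nat \<times> nat) set" and Vmax :: "nat set"
    and r :: "nat \<Rightarrow> nat \<Rightarrow> real" and \<sigma> \<tau> :: "nat \<Rightarrow> nat"
    and lam :: real and u :: "nat \<Rightarrow> real"
  assumes graph: "game_graph n E Vmax"
    and Xi: "Xi n E Vmax \<sigma> \<tau>"
    and P_set: "r \<in> P_set n E Vmax \<sigma> \<tau>"
    and ergodic: "solves_ergodic n E Vmax r lam u"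
begin

abbreviation \<pi> :: "nat \<Rightarrow> nat" where
  "\<pi> \<equiv> policy_map Vmax \<sigma> \<tau>"

lemma edge_lessThan: "(i, j) \<in> E \<Longrightarrow> i < n \<and> j < n"
  using graph by (auto simp: game_graph_def)

lemma Vmax_lessThan: "i \<in> Vmax \<Longrightarrow> i < n"
  using graph by (auto simp: game_graph_def)

lemma policy_edge: "i < n \<Longrightarrow> (i, \<pi> i) \<in> E"
  using Xi by (auto simp: Xi_def is_policy_pair_def policy_map_def Vmin_iff)

lemma policy_lessThan: "\<forall>i<n. \<pi> i < n"
  using policy_edge edge_lessThan by blast

lemma tight_edge_eq_policy:
  assumes "i < n" "(i, j) \<in> E" "lam + u i = r i j + u j"
  shows "j = \<pi> i"
proof -
  txt \<open>Completing \<open>(i, j)\<close> by tight edges elsewhere yields a bias-induced pair, which must be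
    \<open>(\<sigma>, \<tau>)\<close>.\<close>
  define ch where "ch k = (if k = i then j else (SOME j'. (k, j') \<in> E \<and> lam + u k = r k j' + u j'))" for k
  have ch: "(k, ch k) \<in> E \<and> lam + u k = r k (ch k) + u (ch k)" if "k < n" for k
    using someI_ex[OF solves_ergodic_attained[OF graph ergodic that]] assms unfolding ch_def by auto
  have "bias_induced n E Vmax r ch ch"
    unfolding bias_induced_def is_policy_pair_def
    using ergodic ch Vmax_lessThan by (intro conjI exI[of _ lam] exI[of _ u]) (auto simp: Vmin_iff)
  then have "same_pair n Vmax \<sigma> \<tau> ch ch"
    using P_set unfolding P_set_def by blast
  moreover have "ch i = j"
    unfolding ch_def by simp
  ultimately show ?thesis
    using assms(1) unfolding same_pair_def policy_map_def by (metis Vmin_iff)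
qed

lemma policy_edge_tight: "i < n \<Longrightarrow> lam + u i = r i (\<pi> i) + u (\<pi> i)"
  using solves_ergodic_attained[OF graph ergodic] tight_edge_eq_policy by blast

definition center :: nat where
  "center = (SOME c. c < n \<and> (\<forall>j<n. \<exists>k<n. (\<pi>^^k) j = c))"

lemma center: "center < n" "\<forall>j<n. \<exists>k<n. (\<pi>^^k) j = center"
proof -
  have "policy_edges n Vmax \<sigma> \<tau> = {(i, \<pi> i) | i. i < n}"
    unfolding policy_edges_def policy_map_def using Vmax_lessThan by (auto simp: Vmin_iff)
  then have "card (cycles {(i, \<pi> i) | i. i < n}) = 1"
    using Xi unfolding Xi_def by simp
  then obtain c where "c < n" "\<forall>j<n. \<exists>k<n. (\<pi>^^k) j = c"
    by (rule unique_cycle_reachable[OF policy_lessThan])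
  then have "c < n \<and> (\<forall>j<n. \<exists>k<n. (\<pi>^^k) j = c)"
    by blast
  then have "center < n \<and> (\<forall>j<n. \<exists>k<n. (\<pi>^^k) j = center)"
    unfolding center_def by (rule someI)
  then show "center < n" "\<forall>j<n. \<exists>k<n. (\<pi>^^k) j = center"
    by blast+
qed

definition payoff_range :: real where
  "payoff_range = Max {\<bar>r i j - lam\<bar> | i j. (i, j) \<in> E}"

definition gaps :: "real set" where
  "gaps = {\<bar>r i j - lam + u j - u i\<bar> | i j. (i, j) \<in> E \<and> r i j - lam + u j - u i \<noteq> 0}"

lemma cond_num_eq: "cond_num E r lam u = (if gaps = {} then 1 else payoff_range / Min gaps)"
  unfolding cond_num_def gaps_def payoff_range_def Let_def by simp

lemma finite_edges: "finite E"
  using graph finite_subset unfolding game_graph_def by blast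

lemma abs_payoff_le_range: "(i, j) \<in> E \<Longrightarrow> \<bar>r i j - lam\<bar> \<le> payoff_range"
proof -
  have "{\<bar>r i j - lam\<bar> | i j. (i, j) \<in> E} = (\<lambda>(i, j). \<bar>r i j - lam\<bar>) ` E"
    by auto
  then show "(i, j) \<in> E \<Longrightarrow> \<bar>r i j - lam\<bar> \<le> payoff_range"
    unfolding payoff_range_def using finite_edges by (auto intro: Max_ge)
qed

lemma finite_gaps: "finite gaps"
proof -
  have "gaps \<subseteq> (\<lambda>(i, j). \<bar>r i j - lam + u j - u i\<bar>) ` E"
    unfolding gaps_def by auto
  then show ?thesis
    using finite_edges finite_subset by blast
qed

lemma Min_gaps_le_off_policy:
  assumes "(i, j) \<in> E" "j \<noteq> \<pi> i"
  shows "gaps \<noteq> {}" "Min gaps \<le> \<bar>r i j - lam + u j - u i\<bar>"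
proof -
  have "r i j - lam + u j - u i \<noteq> 0"
    using tight_edge_eq_policy[of i j] edge_lessThan assms by auto
  then have "\<bar>r i j - lam + u j - u i\<bar> \<in> gaps"
    using assms(1) unfolding gaps_def by blast
  then show "gaps \<noteq> {}" "Min gaps \<le> \<bar>r i j - lam + u j - u i\<bar>"
    using finite_gaps by auto
qed

lemma bias_oscillation: "\<forall>x<n. \<bar>u x - u center\<bar> \<le> (real n - 1) * payoff_range"
proof -
  have "\<forall>x<n. \<bar>u x - u (\<pi> x)\<bar> \<le> payoff_range"
    using policy_edge_tight abs_payoff_le_range[OF policy_edge] by (smt (verit))
  then show ?thesis
    using abs_diff_reaching_le[OF policy_lessThan] center(2) by blast
qed

lemma Min_gaps_bounds:
  assumes "gaps \<noteq> {}"
  shows "0 < Min gaps" "Min gaps \<le> (2 * real n - 1) * payoff_range"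
proof -
  obtain i j where ij: "(i, j) \<in> E" "Min gaps = \<bar>r i j - lam + u j - u i\<bar>" "r i j - lam + u j - u i \<noteq> 0"
    using Min_in[OF finite_gaps assms] unfolding gaps_def by auto
  then show "0 < Min gaps"
    by simp
  have "\<bar>u i - u center\<bar> \<le> (real n - 1) * payoff_range" "\<bar>u j - u center\<bar> \<le> (real n - 1) * payoff_range"
    using bias_oscillation edge_lessThan[OF ij(1)] by auto
  then show "Min gaps \<le> (2 * real n - 1) * payoff_range"
    using ij(2) abs_payoff_le_range[OF ij(1)] by (simp add: algebra_simps)
qed

lemma above_threshold:
  assumes "1 - 1 / (6 * real n ^ 2 * cond_num E r lam u) < g"
  shows "0 \<le> g" "gaps \<noteq> {} \<Longrightarrow> (1 - g) * (4 * (real n - 1)^2 * payoff_range) < Min gaps"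
proof -
  have "1 \<le> real n"
    using center(1) by simp
  have threshold: "1 - Min gaps / (6 * (real n)^2 * payoff_range) < g"
    and bounds: "0 < Min gaps" "Min gaps \<le> (2 * real n - 1) * payoff_range"
    if "gaps \<noteq> {}"
  proof -
    show bounds: "0 < Min gaps" "Min gaps \<le> (2 * real n - 1) * payoff_range"
      using Min_gaps_bounds[OF that] by auto
    then have "payoff_range \<noteq> 0"
      by auto
    with assms that bounds(1) show "1 - Min gaps / (6 * (real n)^2 * payoff_range) < g"
      by (simp add: cond_num_eq)
  qed
  show "0 \<le> g"
  proof (cases "gaps = {}")
    case True
    have "1 \<le> real n ^ 2"
      using \<open>1 \<le> real n\<close> by (rule one_le_power)
    then have "1 / (6 * real n ^ 2) \<le> 1"
      by (auto simp add: divide_le_eq_1)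
    then show ?thesis
      using assms True by (simp add: cond_num_eq)
  next
    case False
    then show ?thesis
      using discount_above_threshold(1)[OF \<open>1 \<le> real n\<close> bounds threshold] by simp
  qed
  show "(1 - g) * (4 * (real n - 1)^2 * payoff_range) < Min gaps" if "gaps \<noteq> {}"
    using discount_above_threshold(2)[OF \<open>1 \<le> real n\<close> bounds threshold] that by simp
qed

definition correction :: "real \<Rightarrow> nat \<Rightarrow> real" where
  "correction g = discounted_orbit_sum g \<pi> (\<lambda>x. u x - u center)"

text \<open>The first-order ansatz \<open>\<lambda> + (1 - g) (u - u center)\<close> misses the recurrence of the discounted
  payoff of \<open>\<pi>\<close> by \<open>(1 - g)\<^sup>2 (u - u center) \<circ> \<pi>\<close>; the discounted orbit sum cancels this defect.\<close>

definition policy_value :: "real \<Rightarrow> nat \<Rightarrow> real" where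
  "policy_value g i = lam + (1 - g) * (u i - u center) - (1 - g)^2 * correction g (\<pi> i)"

context
  fixes g :: real
  assumes g: "0 \<le> g" "g < 1"
begin

lemma correction_step: "j < n \<Longrightarrow> correction g j = u j - u center + g * correction g (\<pi> j)"
  using discounted_orbit_sum_step[OF policy_lessThan bias_oscillation g] unfolding correction_def .

lemma correction_oscillation:
  assumes "i < n" "j < n"
  shows "\<bar>correction g i - correction g j\<bar> \<le> 4 * (real n - 1)^2 * payoff_range"
proof -
  have step: "\<forall>x<n. \<bar>correction g x - correction g (\<pi> x)\<bar> \<le> 2 * ((real n - 1) * payoff_range)"
    using abs_discounted_orbit_sum_step_le[OF policy_lessThan bias_oscillation g]
    unfolding correction_def by blast
  have "\<bar>correction g x - correction g center\<bar> \<le> (real n - 1) * (2 * ((real n - 1) * payoff_range))"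
    if "x < n" for x
    using abs_diff_reaching_le[OF policy_lessThan step] center(2) that by blast
  from this[OF assms(1)] this[OF assms(2)]
  have "\<bar>correction g i - correction g j\<bar> \<le> 2 * ((real n - 1) * (2 * ((real n - 1) * payoff_range)))"
    by (auto simp: abs_le_iff)
  also have "\<dots> = 4 * (real n - 1)^2 * payoff_range"
    by (simp add: power2_eq_square)
  finally show ?thesis .
qed

lemma policy_value_deviation:
  assumes "j < n"
  shows "policy_value g i - ((1 - g) * r i j + g * policy_value g j)
    = (1 - g) * ((1 - g) * (correction g j - correction g (\<pi> i)) - (r i j - lam + u j - u i))"
  unfolding policy_value_def correction_step[OF assms] by (simp add: power2_eq_square algebra_simps)

lemma policy_value_step:
  assumes "i < n"
  shows "policy_value g i = (1 - g) * r i (\<pi> i) + g * policy_value g (\<pi> i)"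
proof -
  have "r i (\<pi> i) - lam + u (\<pi> i) - u i = 0"
    using policy_edge_tight[OF assms] by simp
  then show ?thesis
    using policy_value_deviation[of "\<pi> i" i] policy_lessThan assms by simp
qed

context
  assumes gap: "gaps \<noteq> {} \<Longrightarrow> (1 - g) * (4 * (real n - 1)^2 * payoff_range) < Min gaps"
begin

lemma correction_gap:
  assumes "(i, j) \<in> E" "j \<noteq> \<pi> i"
  shows "(1 - g) * \<bar>correction g j - correction g (\<pi> i)\<bar> < \<bar>r i j - lam + u j - u i\<bar>"
proof -
  note off = Min_gaps_le_off_policy[OF assms]
  have "(1 - g) * \<bar>correction g j - correction g (\<pi> i)\<bar> \<le> (1 - g) * (4 * (real n - 1)^2 * payoff_range)"
    using correction_oscillation edge_lessThan[OF assms(1)] policy_lessThan g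
    by (intro mult_left_mono) auto
  with gap[OF off(1)] off(2) show ?thesis
    by linarith
qed

lemma policy_value_max_lt:
  assumes "i \<in> Vmax" "(i, j) \<in> E" "j \<noteq> \<pi> i"
  shows "(1 - g) * r i j + g * policy_value g j < policy_value g i"
proof -
  let ?\<Delta> = "correction g j - correction g (\<pi> i)"
  have "r i j - lam + u j - u i \<le> 0"
    using solves_ergodic_max_ge[OF graph ergodic assms(1,2)] by simp
  moreover have "- ((1 - g) * \<bar>?\<Delta>\<bar>) \<le> (1 - g) * ?\<Delta>"
    using mult_left_mono[of "- \<bar>?\<Delta>\<bar>" ?\<Delta> "1 - g"] g by simp
  ultimately have "0 < (1 - g) * ?\<Delta> - (r i j - lam + u j - u i)"
    using correction_gap[OF assms(2,3)] by linarith
  then have "0 < (1 - g) * ((1 - g) * ?\<Delta> - (r i j - lam + u j - u i))"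
    using g(2) by simp
  then show ?thesis
    using policy_value_deviation[of j i] edge_lessThan[OF assms(2)] by simp
qed

lemma policy_value_min_gt:
  assumes "i \<in> Vmin n Vmax" "(i, j) \<in> E" "j \<noteq> \<pi> i"
  shows "policy_value g i < (1 - g) * r i j + g * policy_value g j"
proof -
  let ?\<Delta> = "correction g j - correction g (\<pi> i)"
  have "0 \<le> r i j - lam + u j - u i"
    using solves_ergodic_min_le[OF graph ergodic assms(1,2)] by simp
  moreover have "(1 - g) * ?\<Delta> \<le> (1 - g) * \<bar>?\<Delta>\<bar>"
    using g by (intro mult_left_mono) auto
  ultimately have "(1 - g) * ?\<Delta> - (r i j - lam + u j - u i) < 0"
    using correction_gap[OF assms(2,3)] by linarith
  then have "(1 - g) * ((1 - g) * ?\<Delta> - (r i j - lam + u j - u i)) < 0"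
    using g(2) by (simp add: mult_pos_neg)
  then show ?thesis
    using policy_value_deviation[of j i] edge_lessThan[OF assms(2)] by simp
qed

end

end

lemma unique_optimal_above_threshold:
  assumes "1 - 1 / (6 * real n ^ 2 * cond_num E r lam u) < g" "g < 1"
  shows "disc_optimal n E Vmax r g \<sigma> \<tau> \<and>
    (\<forall>\<sigma>' \<tau>'. disc_optimal n E Vmax r g \<sigma>' \<tau>' \<longrightarrow> same_pair n Vmax \<sigma> \<tau> \<sigma>' \<tau>')"
proof -
  note g = above_threshold(1)[OF assms(1)] assms(2)
  note gap = above_threshold(2)[OF assms(1)]
  have pol: "is_policy_pair n E Vmax \<sigma> \<tau>"
    using Xi by (simp add: Xi_def)
  show ?thesis
  proof (rule disc_optimal_unique_if_strict[OF graph pol g])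
    show "policy_value g i = (1 - g) * r i (\<sigma> i) + g * policy_value g (\<sigma> i)" if "i \<in> Vmax" for i
      using policy_value_step[OF g Vmax_lessThan[OF that]] that by (simp add: policy_map_def)
    show "(1 - g) * r i j + g * policy_value g j < policy_value g i"
      if "i \<in> Vmax" "(i, j) \<in> E" "j \<noteq> \<sigma> i" for i j
      using policy_value_max_lt[OF g gap that(1,2)] that by (simp add: policy_map_def)
    show "policy_value g i = (1 - g) * r i (\<tau> i) + g * policy_value g (\<tau> i)" if "i \<in> Vmin n Vmax" for i
      using policy_value_step[OF g, of i] that by (simp add: policy_map_def Vmin_iff)
    show "policy_value g i < (1 - g) * r i j + g * policy_value g j"
      if "i \<in> Vmin n Vmax" "(i, j) \<in> E" "j \<noteq> \<tau> i" for i j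
      using policy_value_min_gt[OF g gap that(1,2)] that by (simp add: policy_map_def Vmin_iff)
  qed
qed

end

theorem mainTheorem17:
  fixes n :: nat and E :: "(nat \<times> nat) set" and Vmax :: "nat set"
    and r :: "nat \<Rightarrow> nat \<Rightarrow> real" and \<sigma> \<tau> :: "nat \<Rightarrow> nat"
    and lam :: real and u :: "nat \<Rightarrow> real" and \<gamma> :: real
  assumes "game_graph n E Vmax"
    and "ergodic_graph n E Vmax"
    and "Xi n E Vmax \<sigma> \<tau>"
    and "r \<in> P_set n E Vmax \<sigma> \<tau>"
    and "solves_ergodic n E Vmax r lam u"
    and "1 - 1 / (6 * real n ^ 2 * cond_num E r lam u) < \<gamma>" and "\<gamma> < 1"
  shows "disc_optimal n E Vmax r \<gamma> \<sigma> \<tau>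
       \<and> (\<forall>\<sigma>' \<tau>'. disc_optimal n E Vmax r \<gamma> \<sigma>' \<tau>' \<longrightarrow> same_pair n Vmax \<sigma> \<tau> \<sigma>' \<tau>')
       \<and> blackwell_prop n E Vmax r (1 - 1 / (6 * real n ^ 2 * cond_num E r lam u))
       \<and> (\<forall>g. is_blackwell_threshold n E Vmax r g \<longrightarrow> g \<le> 1 - 1 / (6 * real n ^ 2 * cond_num E r lam u))"
proof -
  interpret unique_bias_induced_pair n E Vmax r \<sigma> \<tau> lam u
    using assms(1,3,4,5) by unfold_locales
  define g0 where "g0 = 1 - 1 / (6 * real n ^ 2 * cond_num E r lam u)"
  have unique_optimal: "disc_optimal n E Vmax r g \<sigma> \<tau> \<and>
      (\<forall>\<sigma>' \<tau>'. disc_optimal n E Vmax r g \<sigma>' \<tau>' \<longrightarrow> same_pair n Vmax \<sigma> \<tau> \<sigma>' \<tau>')"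
    if "g0 < g" "g < 1" for g
    using unique_optimal_above_threshold that unfolding g0_def by blast
  have blackwell: "blackwell_prop n E Vmax r g0"
    using unique_optimal by (rule blackwell_prop_if_unique_optimal)
  have "g0 < 1"
    using assms(6,7) unfolding g0_def by linarith
  with unique_optimal[OF assms(6,7)[folded g0_def]] blackwell show ?thesis
    unfolding g0_def[symmetric] using blackwell_threshold_le[OF blackwell] by blast
qed

end
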